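(* Let $q\in\mathbb{N}_+$, let $p\ge 7$ be prime, $n\ge 2$, and let $\sigma\in\{2,3\}^{n-1}$ satisfy $\sum_{i=1}^{n-1}\sigma_i^q = p^q-1$ and $\|k\sigma\bmod p\|_q>\|\sigma\bmod p\|_q$ for every integer $k\not\equiv 0,\pm1\pmod p$; if $q\ge2$ assume moreover $4n-3>2p$. Let $\vec u=(1,\sigma)$, $W_i=p\vec e_i\in\mathbb{R}^n$, $\mathcal{L}_+=\operatorname{span}_{\mathbb{Z}}(W_1,\dots,W_n,\vec u)$, and let $R>p$ be a real number with $\mathcal{L}_+\cap\mathcal{B}_q(R) = \{\vec 0,\pm W_1,\dots,\pm W_n,\pm\vec u\}$. Let $\varepsilon>0$ satisfy $\varepsilon<\frac{R-p}{2}$ and $\varepsilon^q < \frac{p^q(R^q-p^q)}{((n-1)(p-1)+1)^q}$. Define in $\mathbb{R}^{n+1}$: $$\vec v_1=(W_1,\varepsilon),\quad \vec v_i=(W_i,2\varepsilon)\ (2\le i\le n),\quad \tilde{\vec u} = \tfrac1p\sum_{i=1}^n u_i\vec v_i = \Big(\vec u,\ \tfrac{2\sum_{i=1}^{n-1}\sigma_i+1}{p}\varepsilon\Big),$$ let $\tilde{\mathcal{L}}=\operatorname{span}_{\mathbb{Z}}(\vec v_1,\dots,\vec v_n,\tilde{\vec u})$ and $\mathcal{S}=\{\vec 0,\pm\vec v_1,\dots,\pm\vec v_n,\pm\tilde{\vec u}\}$. Then $\tilde{\mathcal{L}}$ is a lattice of rank $n$, $\tilde{\mathcal{L}}\cap\mathcal{B}_q(R)=\mathcal{S}$,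 and $\pm\vec v_1$ are the only shortest nonzero vectors of $\tilde{\mathcal{L}}$ (in $\ell^q$-norm).
   Context: $\|\vec x\|_q=(\sum_i|x_i|^q)^{1/q}$, $\mathcal{B}_q(r)=\{\vec x:\|\vec x\|_q<r\}$ (in the appropriate dimension). For real $\alpha$, $|\alpha|_p=\min_{z\in\mathbb{Z}}|\alpha-zp|$ and $\|\vec x\bmod p\|_q=(\sum_i|x_i|_p^q)^{1/q}$. $\vec e_i$ is the $i$-th standard unit vector; $(W_i,\varepsilon)$ denotes the vector of $\mathbb{R}^{n+1}$ obtained by appending the coordinate $\varepsilon$ to $W_i$. Such an $R$ exists since $\mathcal{L}_+$ is discrete and its nonzero vectors of norm $\le p$ are exactly $\pm W_i,\pm\vec u$. *)

theory Defs
  imports Complex_Main "HOL-Number_Theory.Cong"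
begin

text \<open>Vectors of R^d are represented as functions nat => real, with coordinates
  indexed 1..d (as in the paper) and all other coordinates equal to 0.\<close>

definition qnorm :: "nat \<Rightarrow> nat \<Rightarrow> (nat \<Rightarrow> real) \<Rightarrow> real" where
  "qnorm q d x = root q (\<Sum>i=1..d. \<bar>x i\<bar> ^ q)"

definition qball :: "nat \<Rightarrow> nat \<Rightarrow> real \<Rightarrow> (nat \<Rightarrow> real) set" where
  "qball q d r = {x. (\<forall>j. j \<notin> {1..d} \<longrightarrow> x j = 0) \<and> qnorm q d x < r}"

definition absmod :: "real \<Rightarrow> real \<Rightarrow> real" where
  "absmod p a = Inf {\<bar>a - of_int z * p\<bar> | z. True}"

definition modnorm :: "nat \<Rightarrow> real \<Rightarrow> nat \<Rightarrow> (nat \<Rightarrow> real) \<Rightarrow> real" where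
  "modnorm q p d x = root q (\<Sum>i=1..d. (absmod p (x i)) ^ q)"

definition zspan :: "nat set \<Rightarrow> (nat \<Rightarrow> nat \<Rightarrow> real) \<Rightarrow> (nat \<Rightarrow> real) set" where
  "zspan I g = {x. \<exists>c::nat \<Rightarrow> int. x = (\<lambda>j. \<Sum>i\<in>I. of_int (c i) * g i j)}"

definition lattice_of_rank :: "nat \<Rightarrow> nat \<Rightarrow> (nat \<Rightarrow> real) set \<Rightarrow> bool" where
  "lattice_of_rank d k L \<longleftrightarrow>
     (\<exists>b::nat \<Rightarrow> nat \<Rightarrow> real.
        (\<forall>i\<in>{1..k}. \<forall>j. j \<notin> {1..d} \<longrightarrow> b i j = 0) \<and>
        (\<forall>c::nat \<Rightarrow> real. (\<forall>j. (\<Sum>i=1..k. c i * b i j) = 0) \<longrightarrow> (\<forall>i\<in>{1..k}. c i = 0)) \<and>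
        L = zspan {1..k} b)"

definition Wvec :: "nat \<Rightarrow> nat \<Rightarrow> nat \<Rightarrow> real" where
  "Wvec p i = (\<lambda>j. if j = i then real p else 0)"

definition uvec :: "nat \<Rightarrow> (nat \<Rightarrow> int) \<Rightarrow> nat \<Rightarrow> real" where
  "uvec n \<sigma> = (\<lambda>j. if j = 1 then 1 else if 2 \<le> j \<and> j \<le> n then of_int (\<sigma> (j - 1)) else 0)"

definition Lplus :: "nat \<Rightarrow> nat \<Rightarrow> (nat \<Rightarrow> int) \<Rightarrow> (nat \<Rightarrow> real) set" where
  "Lplus p n \<sigma> = zspan {1..n+1} (\<lambda>i. if i \<le> n then Wvec p i else uvec n \<sigma>)"

definition vvec :: "nat \<Rightarrow> nat \<Rightarrow> real \<Rightarrow> nat \<Rightarrow> nat \<Rightarrow> real" where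
  "vvec p n \<epsilon> i = (\<lambda>j. if j = i then real p
                         else if j = n + 1 then (if i = 1 then \<epsilon> else 2 * \<epsilon>) else 0)"

definition utilde :: "nat \<Rightarrow> nat \<Rightarrow> (nat \<Rightarrow> int) \<Rightarrow> real \<Rightarrow> nat \<Rightarrow> real" where
  "utilde p n \<sigma> \<epsilon> = (\<lambda>j. (1 / real p) * (\<Sum>i=1..n. uvec n \<sigma> i * vvec p n \<epsilon> i j))"

definition Ltilde :: "nat \<Rightarrow> nat \<Rightarrow> (nat \<Rightarrow> int) \<Rightarrow> real \<Rightarrow> (nat \<Rightarrow> real) set" where
  "Ltilde p n \<sigma> \<epsilon> = zspan {1..n+1} (\<lambda>i. if i \<le> n then vvec p n \<epsilon> i else utilde p n \<sigma> \<epsilon>)"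

end

theory Submission
  imports Defs
begin

text \<open>The linear map \<open>y \<mapsto> (y, \<epsilon>/p \<cdot> (y\<^sub>1 + 2y\<^sub>2 + \<dots> + 2y\<^sub>n))\<close> sends \<open>W\<^sub>i\<close> to \<open>v\<^sub>i\<close>
  and \<open>u\<close> to \<open>\<tilde>u\<close>, so it maps \<open>\<L>\<^sub>+\<close> onto \<open>\<tilde>\<L>\<close> and keeps the rank. It only appends a
  coordinate, so the \<open>q\<close>-th power of the norm can only grow: a lifted vector lies in
  \<open>\<B>\<^sub>q(R)\<close> only if it is the lift of \<open>0, \<plusminus>W\<^sub>i\<close> or \<open>\<plusminus>u\<close>, and the bounds on \<open>\<epsilon>\<close> put all
  these lifts inside \<open>\<B>\<^sub>q(R)\<close>. Among them \<open>\<plusminus>v\<^sub>1\<close> are strictly shortest, since the last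
  coordinate is \<open>\<epsilon>\<close> for \<open>v\<^sub>1\<close>, \<open>2\<epsilon>\<close> for the other \<open>v\<^sub>i\<close>, and \<open>(1 + 2\<Sum>\<sigma>\<^sub>i) \<epsilon> / p > \<epsilon>\<close>
  for \<open>\<tilde>u\<close>.\<close>

abbreviation in_dim :: "nat \<Rightarrow> (nat \<Rightarrow> real) \<Rightarrow> bool" where
  "in_dim d x \<equiv> \<forall>j. j \<notin> {1..d} \<longrightarrow> x j = 0"

lemma zspan_insert_redundant:
  assumes "finite I" "k \<notin> I" "g k \<in> zspan I g"
  shows "zspan (insert k I) g = zspan I g"
proof
  obtain a where a: "g k = (\<lambda>j. \<Sum>i\<in>I. of_int (a i) * g i j)"
    using assms(3) unfolding zspan_def by blast
  show "zspan (insert k I) g \<subseteq> zspan I g"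
  proof
    fix x assume "x \<in> zspan (insert k I) g"
    then obtain c where "x = (\<lambda>j. \<Sum>i\<in>insert k I. of_int (c i) * g i j)"
      unfolding zspan_def by blast
    also have "\<dots> = (\<lambda>j. \<Sum>i\<in>I. of_int (c i + c k * a i) * g i j)"
      using assms(1,2) by (intro ext) (simp add: a sum_distrib_left sum.distrib algebra_simps)
    finally show "x \<in> zspan I g"
      unfolding zspan_def by (auto intro!: exI[of _ "\<lambda>i. c i + c k * a i"])
  qed
  show "zspan I g \<subseteq> zspan (insert k I) g"
  proof
    fix x assume "x \<in> zspan I g"
    then obtain c where x: "x = (\<lambda>j. \<Sum>i\<in>I. of_int (c i) * g i j)"
      unfolding zspan_def by blast
    have "x = (\<lambda>j. \<Sum>i\<in>insert k I. of_int ((c(k := 0)) i) * g i j)"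
      using assms(1,2) unfolding x by (auto intro!: sum.cong)
    then show "x \<in> zspan (insert k I) g" unfolding zspan_def by blast
  qed
qed

lemma zspan_cong: "(\<And>i. i \<in> I \<Longrightarrow> g i = h i) \<Longrightarrow> zspan I g = zspan I h"
  by (simp add: zspan_def)

lemma zspan_reindex:
  assumes "bij_betw h J I"
  shows "zspan I g = zspan J (g \<circ> h)"
proof
  show "zspan I g \<subseteq> zspan J (g \<circ> h)"
  proof
    fix x assume "x \<in> zspan I g"
    then obtain c where "x = (\<lambda>j. \<Sum>i\<in>I. of_int (c i) * g i j)"
      unfolding zspan_def by blast
    also have "\<dots> = (\<lambda>j. \<Sum>i\<in>J. of_int ((c \<circ> h) i) * (g \<circ> h) i j)"
      by (intro ext) (simp add: sum.reindex_bij_betw[OF assms, symmetric])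
    finally show "x \<in> zspan J (g \<circ> h)" unfolding zspan_def by blast
  qed
  show "zspan J (g \<circ> h) \<subseteq> zspan I g"
  proof
    fix x assume "x \<in> zspan J (g \<circ> h)"
    then obtain c where "x = (\<lambda>j. \<Sum>i\<in>J. of_int (c i) * (g \<circ> h) i j)"
      unfolding zspan_def by blast
    also have "\<dots> = (\<lambda>j. \<Sum>i\<in>I. of_int ((c \<circ> inv_into J h) i) * g i j)"
      by (intro ext) (simp add: sum.reindex_bij_betw[OF assms, symmetric]
          bij_betw_inv_into_left[OF assms] cong: sum.cong)
    finally show "x \<in> zspan I g" unfolding zspan_def by blast
  qed
qed

section \<open>\<open>\<ell>\<^sup>q\<close>-norms and shortest vectors\<close>

definition powsum :: "nat \<Rightarrow> nat \<Rightarrow> (nat \<Rightarrow> real) \<Rightarrow> real" where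
  "powsum q d x = (\<Sum>i=1..d. \<bar>x i\<bar> ^ q)"

lemma powsum_uminus [simp]: "powsum q d (\<lambda>j. - x j) = powsum q d x"
  by (simp add: powsum_def)

lemma qnorm_uminus [simp]: "qnorm q d (\<lambda>j. - x j) = qnorm q d x"
  by (simp add: qnorm_def)

lemma qnorm_less_qnorm_iff:
  "q \<ge> 1 \<Longrightarrow> qnorm q d x < qnorm q d y \<longleftrightarrow> powsum q d x < powsum q d y"
  by (simp add: qnorm_def powsum_def)

lemma qnorm_less_iff:
  assumes "q \<ge> 1" "R > 0"
  shows "qnorm q d x < R \<longleftrightarrow> powsum q d x < R ^ q"
proof -
  have "R = root q (R ^ q)"
    using assms by (simp add: real_root_power_cancel)
  then show ?thesis
    using assms(1) by (metis qnorm_def powsum_def real_root_less_iff not_one_le_zero neq0_conv)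
qed

lemma power_add_le_add_power:
  fixes a b :: real
  assumes "a \<ge> 0" "b \<ge> 0" "q \<ge> 1"
  shows "a ^ q + b ^ q \<le> (a + b) ^ q"
  using assms(3)
proof (induction q rule: dec_induct)
  case base
  then show ?case by simp
next
  case (step m)
  have "a ^ Suc m + b ^ Suc m \<le> (a + b) * (a ^ m + b ^ m)"
    using assms(1,2) by (simp add: algebra_simps)
  also have "\<dots> \<le> (a + b) * (a + b) ^ m"
    using assms(1,2) step.IH by (intro mult_left_mono) auto
  finally show ?case by simp
qed

lemma shortest_vectors_eq:
  assumes dim: "\<forall>x\<in>L. in_dim d x"
    and ball: "L \<inter> qball q d R = S"
    and v: "v \<in> S" "v \<noteq> (\<lambda>j. 0)" "(\<lambda>j. - v j) \<in> S"
    and longer: "\<forall>x\<in>S. x \<noteq> (\<lambda>j. 0) \<and> x \<noteq> v \<and> x \<noteq> (\<lambda>j. - v j) \<longrightarrow> qnorm q d v < qnorm q d x"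
  shows "{x \<in> L. x \<noteq> (\<lambda>j. 0) \<and> (\<forall>y\<in>L. y \<noteq> (\<lambda>j. 0) \<longrightarrow> qnorm q d x \<le> qnorm q d y)}
           = {v, (\<lambda>j. - v j)}"
proof -
  have v_short: "qnorm q d v < R"
    using ball v(1) by (auto simp: qball_def)
  have v_minimal: "qnorm q d v \<le> qnorm q d y" if "y \<in> L" "y \<noteq> (\<lambda>j. 0)" for y
  proof (cases "y \<in> S")
    case True
    then show ?thesis
      using longer that(2) by (cases "y = v \<or> y = (\<lambda>j. - v j)") auto
  next
    case False
    then have "\<not> qnorm q d y < R"
      using ball dim that(1) by (auto simp: qball_def)
    then show ?thesis using v_short by linarith
  qed
  have v'_nonzero: "(\<lambda>j. - v j) \<noteq> (\<lambda>j. 0)"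
    using v(2) by (metis neg_equal_0_iff_equal)
  have "v \<in> L" "(\<lambda>j. - v j) \<in> L"
    using ball v(1,3) by auto
  moreover have "x = v \<or> x = (\<lambda>j. - v j)"
    if "x \<in> L" "x \<noteq> (\<lambda>j. 0)" "qnorm q d x \<le> qnorm q d v" for x
  proof -
    have "x \<in> S"
      using that(1,3) ball dim v_short by (auto simp: qball_def)
    then show ?thesis
      using longer that(2,3) by fastforce
  qed
  ultimately show ?thesis
    using v(2) v'_nonzero v_minimal by (auto simp del: qnorm_uminus) (auto intro: order_trans)
qed

section \<open>The lifting map\<close>

definition lift_weight :: "nat \<Rightarrow> real" where
  "lift_weight k = (if k = 1 then 1 else 2)"

definition lift_form :: "nat \<Rightarrow> (nat \<Rightarrow> real) \<Rightarrow> real" where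
  "lift_form n y = (\<Sum>k=1..n. lift_weight k * y k)"

definition lift_vec :: "nat \<Rightarrow> nat \<Rightarrow> real \<Rightarrow> (nat \<Rightarrow> real) \<Rightarrow> nat \<Rightarrow> real" where
  "lift_vec p n \<epsilon> y = (\<lambda>j. if j = n + 1 then \<epsilon> / real p * lift_form n y else y j)"

lemma lift_vec_sum:
  "finite I \<Longrightarrow> lift_vec p n \<epsilon> (\<lambda>j. \<Sum>i\<in>I. a i * g i j) = (\<lambda>j. \<Sum>i\<in>I. a i * lift_vec p n \<epsilon> (g i) j)"
  by (auto simp: lift_vec_def lift_form_def sum_distrib_left sum_distrib_right
      mult_ac sum.swap[of _ I])

lemma lift_vec_uminus: "lift_vec p n \<epsilon> (\<lambda>j. - y j) = (\<lambda>j. - lift_vec p n \<epsilon> y j)"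
  by (auto simp: lift_vec_def lift_form_def sum_negf)

lemma lift_vec_zero: "lift_vec p n \<epsilon> (\<lambda>j. 0) = (\<lambda>j. 0)"
  by (auto simp: lift_vec_def lift_form_def)

lemma lift_form_Wvec: "i \<in> {1..n} \<Longrightarrow> lift_form n (Wvec p i) = real p * lift_weight i"
  by (simp add: lift_form_def Wvec_def if_distrib[of "\<lambda>x. _ * x"] sum.delta cong: if_cong)

lemma vvec_eq_lift_vec:
  assumes "p > 0" "i \<in> {1..n}"
  shows "vvec p n \<epsilon> i = lift_vec p n \<epsilon> (Wvec p i)"
  unfolding lift_vec_def lift_form_Wvec[OF assms(2)]
  using assms by (auto simp: vvec_def Wvec_def lift_weight_def)

lemma utilde_eq_lift_vec:
  assumes "p > 0" "n \<ge> 1"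
  shows "utilde p n \<sigma> \<epsilon> = lift_vec p n \<epsilon> (uvec n \<sigma>)"
proof -
  have u_comb: "(\<lambda>j. \<Sum>i=1..n. uvec n \<sigma> i * Wvec p i j) = (\<lambda>j. real p * uvec n \<sigma> j)"
    using assms(2) by (auto simp: Wvec_def uvec_def if_distrib[of "\<lambda>x. _ * x"] sum.delta cong: if_cong)
  have "utilde p n \<sigma> \<epsilon> = (\<lambda>j. 1 / real p * lift_vec p n \<epsilon> (\<lambda>j. \<Sum>i=1..n. uvec n \<sigma> i * Wvec p i j) j)"
    unfolding utilde_def using assms(1) by (simp add: lift_vec_sum vvec_eq_lift_vec)
  also have "\<dots> = lift_vec p n \<epsilon> (uvec n \<sigma>)"
    unfolding u_comb using lift_vec_sum[of "{0::nat}" p n \<epsilon> "\<lambda>_. real p" "\<lambda>_. uvec n \<sigma>"] assms(1)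
    by simp
  finally show ?thesis .
qed

lemma powsum_lift_vec:
  "in_dim n y \<Longrightarrow> powsum q (n + 1) (lift_vec p n \<epsilon> y) = powsum q n y + \<bar>\<epsilon> / real p * lift_form n y\<bar> ^ q"
  by (simp add: powsum_def lift_vec_def)

lemma in_dim_lift_vec: "in_dim n y \<Longrightarrow> in_dim (n + 1) (lift_vec p n \<epsilon> y)"
  by (auto simp: lift_vec_def)

lemma zspan_image_lift_vec:
  assumes "finite I"
  shows "lift_vec p n \<epsilon> ` zspan I g = zspan I (\<lambda>i. lift_vec p n \<epsilon> (g i))"
proof -
  have range: "zspan I h = range (\<lambda>c j. \<Sum>i\<in>I. of_int (c i) * h i j)" for h
    by (auto simp: zspan_def)
  show ?thesis
    unfolding range image_image using assms by (simp add: lift_vec_sum)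
qed

lemma Ltilde_eq_image_lift_vec:
  assumes "p > 0" "n \<ge> 1"
  shows "Ltilde p n \<sigma> \<epsilon> = lift_vec p n \<epsilon> ` Lplus p n \<sigma>"
  unfolding Ltilde_def Lplus_def zspan_image_lift_vec[OF finite_atLeastAtMost]
  using assms by (intro zspan_cong) (auto simp: vvec_eq_lift_vec utilde_eq_lift_vec)

lemma lattice_of_rank_image_lift_vec:
  assumes "lattice_of_rank n k L"
  shows "lattice_of_rank (n + 1) k (lift_vec p n \<epsilon> ` L)"
proof -
  obtain b where dim: "\<forall>i\<in>{1..k}. in_dim n (b i)"
    and indep: "\<forall>c. (\<forall>j. (\<Sum>i=1..k. c i * b i j) = 0) \<longrightarrow> (\<forall>i\<in>{1..k}. c i = 0)"
    and L: "L = zspan {1..k} b"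
    using assms unfolding lattice_of_rank_def by blast
  have lifted_indep: "\<forall>j. (\<Sum>i=1..k. c i * b i j) = 0"
    if "\<forall>j. (\<Sum>i=1..k. c i * lift_vec p n \<epsilon> (b i) j) = 0" for c
  proof
    fix j
    show "(\<Sum>i=1..k. c i * b i j) = 0"
    proof (cases "j = n + 1")
      case True
      then show ?thesis using dim by simp
    next
      case False
      have "lift_vec p n \<epsilon> (\<lambda>j. \<Sum>i=1..k. c i * b i j) j = 0"
        using that by (simp add: lift_vec_sum)
      then show ?thesis
        using False by (simp add: lift_vec_def)
    qed
  qed
  have "\<forall>i\<in>{1..k}. in_dim (n + 1) (lift_vec p n \<epsilon> (b i))"
    using dim by (auto simp: lift_vec_def)
  then show ?thesis
    unfolding lattice_of_rank_def L zspan_image_lift_vec[OF finite_atLeastAtMost]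
    using indep lifted_indep by (intro exI[of _ "\<lambda>i. lift_vec p n \<epsilon> (b i)"]) blast
qed

lemma lift_vec_image_inter_qball:
  assumes q: "q \<ge> 1" and R: "R > 0"
    and dim: "\<forall>y\<in>L. in_dim n y"
    and ball: "L \<inter> qball q n R = S"
    and short: "\<forall>y\<in>S. powsum q (n + 1) (lift_vec p n \<epsilon> y) < R ^ q"
  shows "lift_vec p n \<epsilon> ` L \<inter> qball q (n + 1) R = lift_vec p n \<epsilon> ` S"
proof -
  have in_ball_iff: "lift_vec p n \<epsilon> y \<in> qball q (n + 1) R \<longleftrightarrow> powsum q (n + 1) (lift_vec p n \<epsilon> y) < R ^ q"
    if "y \<in> L" for y
    using dim that qnorm_less_iff[OF q R] by (auto simp: qball_def lift_vec_def)
  have "y \<in> S" if "y \<in> L" "powsum q (n + 1) (lift_vec p n \<epsilon> y) < R ^ q" for y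
  proof -
    have "powsum q (n + 1) (lift_vec p n \<epsilon> y) = powsum q n y + \<bar>\<epsilon> / real p * lift_form n y\<bar> ^ q"
      using dim that(1) by (intro powsum_lift_vec) blast
    then have "powsum q n y < R ^ q"
      using that(2) zero_le_power_abs[of "\<epsilon> / real p * lift_form n y" q] by linarith
    then show ?thesis
      using that(1) dim ball qnorm_less_iff[OF q R] by (auto simp: qball_def)
  qed
  moreover have "S \<subseteq> L"
    using ball by blast
  ultimately show ?thesis
    using in_ball_iff short by auto
qed

definition signed_set :: "nat \<Rightarrow> (nat \<Rightarrow> nat \<Rightarrow> real) \<Rightarrow> (nat \<Rightarrow> real) \<Rightarrow> (nat \<Rightarrow> real) set" where
  "signed_set n w u = {(\<lambda>j. 0)} \<union> {w i | i. i \<in> {1..n}} \<union> {(\<lambda>j. - w i j) | i. i \<in> {1..n}}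
                        \<union> {u, (\<lambda>j. - u j)}"

lemma lift_vec_image_signed_set:
  "lift_vec p n \<epsilon> ` signed_set n w u = signed_set n (\<lambda>i. lift_vec p n \<epsilon> (w i)) (lift_vec p n \<epsilon> u)"
  unfolding signed_set_def image_Un image_insert image_empty setcompr_eq_image image_image
  by (simp add: lift_vec_zero lift_vec_uminus)

lemma signed_set_cong:
  "(\<And>i. i \<in> {1..n} \<Longrightarrow> w i = w' i) \<Longrightarrow> signed_set n w u = signed_set n w' u"
  unfolding signed_set_def by (intro arg_cong2[where f = "(\<union>)"] refl; force)

section \<open>The lattice \<open>\<L>\<^sub>+\<close>\<close>

lemma Wvec_1_in_zspan:
  assumes "n \<ge> 1"
  shows "Wvec p 1 \<in> zspan {2..n+1} (\<lambda>i. if i \<le> n then Wvec p i else uvec n \<sigma>)"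
proof -
  \<comment> \<open>\<open>W\<^sub>1 = p u - (\<sigma>\<^sub>1 W\<^sub>2 + \<dots> + \<sigma>\<^sub>n\<^sub>-\<^sub>1 W\<^sub>n)\<close>\<close>
  define c where "c i = (if i = n + 1 then int p else - \<sigma> (i - 1))" for i
  have "Wvec p 1 j = (\<Sum>i=2..n+1. of_int (c i) * (if i \<le> n then Wvec p i else uvec n \<sigma>) j)" for j
  proof -
    have "(\<Sum>i=2..n+1. of_int (c i) * (if i \<le> n then Wvec p i else uvec n \<sigma>) j)
        = (\<Sum>i=2..n. - of_int (\<sigma> (i - 1)) * Wvec p i j) + real p * uvec n \<sigma> j"
      using assms by (simp add: c_def)
    also have "(\<Sum>i=2..n. - of_int (\<sigma> (i - 1)) * Wvec p i j)
        = (if j \<in> {2..n} then - of_int (\<sigma> (j - 1)) * real p else 0)"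
      by (simp add: Wvec_def if_distrib[of "\<lambda>x. _ * x"] sum.delta cong: if_cong)
    finally show ?thesis
      by (auto simp: Wvec_def uvec_def)
  qed
  then show ?thesis
    unfolding zspan_def by blast
qed

lemma Lplus_eq_zspan_basis:
  assumes "n \<ge> 1"
  shows "Lplus p n \<sigma> = zspan {1..n} (\<lambda>i. if i = 1 then uvec n \<sigma> else Wvec p i)"
proof -
  let ?g = "\<lambda>i. if i \<le> n then Wvec p i else uvec n \<sigma>"
  let ?h = "\<lambda>i::nat. if i = 1 then n + 1 else i"
  have h: "bij_betw ?h {1..n} {2..n+1}"
    by (rule bij_betw_imageI) (auto simp: inj_on_def image_def intro: bexI[of _ 1])
  have "Lplus p n \<sigma> = zspan (insert 1 {2..n+1}) ?g"
    unfolding Lplus_def by (simp add: atLeastAtMost_insertL numeral_2_eq_2)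
  also have "\<dots> = zspan {2..n+1} ?g"
    using assms Wvec_1_in_zspan[OF assms] by (intro zspan_insert_redundant) simp_all
  also have "\<dots> = zspan {1..n} (?g \<circ> ?h)"
    by (rule zspan_reindex[OF h])
  also have "\<dots> = zspan {1..n} (\<lambda>i. if i = 1 then uvec n \<sigma> else Wvec p i)"
    by (rule zspan_cong) auto
  finally show ?thesis .
qed

lemma lattice_of_rank_Lplus:
  assumes "p > 0" "n \<ge> 1"
  shows "lattice_of_rank n n (Lplus p n \<sigma>)"
proof -
  define b where "b i = (if i = 1 then uvec n \<sigma> else Wvec p i)" for i
  have comb: "(\<Sum>i=1..n. c i * b i j) = c 1 * uvec n \<sigma> j + (if j \<in> {2..n} then c j * real p else 0)"
    for c j
    using assms(2) by (simp add: b_def sum.atLeast_Suc_atMost Wvec_def numeral_2_eq_2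
        if_distrib[of "\<lambda>x. _ * x"] sum.delta cong: if_cong)
  have "\<forall>i\<in>{1..n}. c i = 0" if "\<forall>j. (\<Sum>i=1..n. c i * b i j) = 0" for c
  proof
    fix k assume k: "k \<in> {1..n}"
    have c1: "c 1 = 0"
      using that[rule_format, of 1] comb[of c 1] by (simp add: uvec_def)
    show "c k = 0"
      using that[rule_format, of k] comb[of c k] k c1 assms(1) by (cases "k = 1") auto
  qed
  moreover have "\<forall>i\<in>{1..n}. in_dim n (b i)"
    by (auto simp: b_def uvec_def Wvec_def)
  ultimately show ?thesis
    unfolding lattice_of_rank_def Lplus_eq_zspan_basis[OF assms(2)] b_def[symmetric] by blast
qed

lemma in_dim_Lplus: "n \<ge> 1 \<Longrightarrow> y \<in> Lplus p n \<sigma> \<Longrightarrow> in_dim n y"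
  unfolding Lplus_def zspan_def by (auto intro!: sum.neutral simp: Wvec_def uvec_def)

lemma sum_atLeast1_Suc:
  fixes f :: "nat \<Rightarrow> 'a::comm_monoid_add"
  shows "(\<Sum>i=1..Suc m. f i) = f 1 + (\<Sum>i=1..m. f (Suc i))"
  by (subst sum.atLeast_Suc_atMost) (simp_all add: sum.atLeast_Suc_atMost_Suc_shift del: sum.cl_ivl_Suc)

lemma in_dim_uvec: "n \<ge> 1 \<Longrightarrow> in_dim n (uvec n \<sigma>)"
  by (simp add: uvec_def)

lemma powsum_uvec:
  assumes "n \<ge> 1"
  shows "powsum q n (uvec n \<sigma>) = 1 + (\<Sum>i=1..n-1. \<bar>of_int (\<sigma> i)\<bar> ^ q)"
proof -
  obtain m where n: "n = Suc m" using assms by (cases n) auto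
  show ?thesis
    unfolding powsum_def n sum_atLeast1_Suc by (simp add: uvec_def)
qed

lemma lift_form_uvec:
  assumes "n \<ge> 1"
  shows "lift_form n (uvec n \<sigma>) = 1 + 2 * (\<Sum>i=1..n-1. of_int (\<sigma> i))"
proof -
  obtain m where n: "n = Suc m" using assms by (cases n) auto
  show ?thesis
    unfolding lift_form_def n sum_atLeast1_Suc by (simp add: uvec_def lift_weight_def sum_distrib_left)
qed

lemma powsum_uvec_eq:
  assumes "n \<ge> 1" "\<forall>i\<in>{1..n-1}. \<sigma> i \<ge> 0"
    and "(\<Sum>i=1..n-1. \<sigma> i ^ q) = int p ^ q - 1"
  shows "powsum q n (uvec n \<sigma>) = real p ^ q"
proof -
  have "(\<Sum>i=1..n-1. \<bar>of_int (\<sigma> i)\<bar> ^ q) = (\<Sum>i=1..n-1. of_int (\<sigma> i ^ q) :: real)"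
    using assms(2) by (intro sum.cong) auto
  also have "\<dots> = of_int (int p ^ q - 1)"
    unfolding of_int_sum[symmetric] assms(3) ..
  finally show ?thesis
    by (simp add: powsum_uvec[OF assms(1)])
qed

lemma lift_form_uvec_bounds:
  assumes "q \<ge> 1" "p \<ge> 7" "n \<ge> 2"
    and sigma_vals: "\<forall>i\<in>{1..n-1}. \<sigma> i \<in> {2, 3}"
    and sigma_sum: "(\<Sum>i=1..n-1. \<sigma> i ^ q) = int p ^ q - 1"
    and "q \<ge> 2 \<longrightarrow> 4 * int n - 3 > 2 * int p"
  shows "real p < lift_form n (uvec n \<sigma>)"
    and "lift_form n (uvec n \<sigma>) \<le> real ((n - 1) * (p - 1) + 1)"
proof -
  define s where "s = (\<Sum>i=1..n-1. \<sigma> i)"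
  have form: "lift_form n (uvec n \<sigma>) = of_int (1 + 2 * s)"
    using assms(3) by (simp add: lift_form_uvec s_def)
  have "(\<Sum>i=1..n-1. 2) \<le> s" "s \<le> (\<Sum>i=1..n-1. 3)"
    unfolding s_def by (intro sum_mono; use sigma_vals in fastforce)+
  then have s_lower: "2 * int (n - 1) \<le> s" and s_upper: "s \<le> 3 * int (n - 1)"
    by simp_all
  have "int p < 1 + 2 * s"
  proof (cases "q = 1")
    case True
    then show ?thesis using sigma_sum assms(2) by (simp add: s_def)
  next
    case False
    then show ?thesis using assms(1,3,6) s_lower by auto
  qed
  then show "real p < lift_form n (uvec n \<sigma>)"
    unfolding form by linarith
  have "1 + 2 * s \<le> int ((n - 1) * (p - 1) + 1)"
    using s_upper assms(2) mult_left_mono[of 6 "int p - 1" "int (n - 1)"] by (simp add: of_nat_diff)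
  then show "lift_form n (uvec n \<sigma>) \<le> real ((n - 1) * (p - 1) + 1)"
    unfolding form by linarith
qed

lemma powsum_lift_Wvec:
  assumes "q \<ge> 1" "p > 0" "k \<in> {1..n}"
  shows "powsum q (n + 1) (lift_vec p n \<epsilon> (Wvec p k)) = real p ^ q + \<bar>\<epsilon> * lift_weight k\<bar> ^ q"
proof -
  have "powsum q n (Wvec p k) = (\<Sum>i=1..n. if i = k then real p ^ q else 0)"
    unfolding powsum_def Wvec_def using assms(1) by (intro sum.cong) auto
  then have "powsum q n (Wvec p k) = real p ^ q"
    using assms(3) by simp
  moreover have "in_dim n (Wvec p k)"
    using assms(3) by (simp add: Wvec_def)
  ultimately show ?thesis
    using assms(2,3) powsum_lift_vec[of n "Wvec p k" q p \<epsilon>] by (simp add: lift_form_Wvec)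
qed

lemma powsum_lift_Wvec_less:
  assumes "q \<ge> 1" "p > 0" "k \<in> {1..n}" "\<epsilon> > 0" "\<epsilon> < (R - real p) / 2"
  shows "powsum q (n + 1) (lift_vec p n \<epsilon> (Wvec p k)) < R ^ q"
proof -
  have "\<bar>\<epsilon> * lift_weight k\<bar> ^ q \<le> (2 * \<epsilon>) ^ q"
    using assms(4) by (intro power_mono) (auto simp: lift_weight_def)
  moreover have "real p ^ q + (2 * \<epsilon>) ^ q \<le> (real p + 2 * \<epsilon>) ^ q"
    using assms(1,4) by (intro power_add_le_add_power) auto
  moreover have "(real p + 2 * \<epsilon>) ^ q < R ^ q"
    using assms(1,4,5) by (intro power_strict_mono) auto
  ultimately show ?thesis
    using powsum_lift_Wvec[OF assms(1-3), of \<epsilon>] by linarith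
qed

lemma powsum_lift_less:
  assumes "in_dim n y" "powsum q n y = real p ^ q" "p > 0" "\<epsilon> \<ge> 0"
    and "\<bar>lift_form n y\<bar> \<le> M" "M > 0"
    and "\<epsilon> ^ q < real p ^ q * (R ^ q - real p ^ q) / M ^ q"
  shows "powsum q (n + 1) (lift_vec p n \<epsilon> y) < R ^ q"
proof -
  have "\<bar>\<epsilon> / real p * lift_form n y\<bar> ^ q = \<epsilon> ^ q * \<bar>lift_form n y\<bar> ^ q / real p ^ q"
    using assms(4) by (simp add: abs_mult power_mult_distrib power_divide)
  also have "\<dots> \<le> \<epsilon> ^ q * M ^ q / real p ^ q"
    using assms(4,5) by (intro divide_right_mono mult_left_mono power_mono) auto
  also have "\<dots> < R ^ q - real p ^ q"
    using assms(3,6,7) by (simp add: pos_divide_less_eq pos_less_divide_eq mult.commute)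
  finally show ?thesis
    using powsum_lift_vec[OF assms(1), of q p \<epsilon>] assms(2) by linarith
qed

lemma lift_vec_image_inter_qball_signed_set:
  assumes q: "q \<ge> 1" and "p > 0" "\<epsilon> > 0" "\<epsilon> < (R - real p) / 2"
    and u: "in_dim n u" "powsum q n u = real p ^ q" "real p < lift_form n u" "lift_form n u \<le> M"
    and "\<epsilon> ^ q < real p ^ q * (R ^ q - real p ^ q) / M ^ q"
    and dim: "\<forall>y\<in>L. in_dim n y"
    and ball: "L \<inter> qball q n R = signed_set n (Wvec p) u"
  shows "lift_vec p n \<epsilon> ` L \<inter> qball q (n + 1) R = lift_vec p n \<epsilon> ` signed_set n (Wvec p) u"
proof (rule lift_vec_image_inter_qball[OF q _ dim ball])
  show R: "R > 0"
    using assms(2-4) by (simp add: field_simps)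
  then have "powsum q (n + 1) (lift_vec p n \<epsilon> (\<lambda>j. 0)) < R ^ q"
    using q by (simp add: lift_vec_zero powsum_def zero_power)
  moreover have "powsum q (n + 1) (lift_vec p n \<epsilon> u) < R ^ q"
    using assms by (intro powsum_lift_less[where M = M]) auto
  ultimately show "\<forall>y\<in>signed_set n (Wvec p) u. powsum q (n + 1) (lift_vec p n \<epsilon> y) < R ^ q"
    using powsum_lift_Wvec_less[OF assms(1,2) _ assms(3,4)]
    by (auto simp: signed_set_def lift_vec_uminus)
qed

lemma qnorm_lift_Wvec_1_less:
  assumes q: "q \<ge> 1" and "p > 0" "\<epsilon> > 0" "n \<ge> 1"
    and u: "in_dim n u" "powsum q n u = real p ^ q" "real p < lift_form n u"
  defines "v \<equiv> lift_vec p n \<epsilon> (Wvec p 1)"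
  shows "\<forall>x\<in>lift_vec p n \<epsilon> ` signed_set n (Wvec p) u. x \<noteq> (\<lambda>j. 0) \<and> x \<noteq> v \<and> x \<noteq> (\<lambda>j. - v j)
           \<longrightarrow> qnorm q (n + 1) v < qnorm q (n + 1) x"
proof -
  have v: "powsum q (n + 1) v = real p ^ q + \<epsilon> ^ q"
    using powsum_lift_Wvec[OF assms(1,2), of 1 n \<epsilon>] assms(3,4) by (simp add: v_def lift_weight_def)
  have shorter_than_W: "powsum q (n + 1) v < powsum q (n + 1) (lift_vec p n \<epsilon> (Wvec p k))"
    if "k \<in> {1..n}" "k \<noteq> 1" for k
  proof -
    have "\<epsilon> ^ q < \<bar>\<epsilon> * lift_weight k\<bar> ^ q"
      using assms(3) q that by (intro power_strict_mono) (auto simp: lift_weight_def)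
    then show ?thesis
      using v powsum_lift_Wvec[OF assms(1,2) that(1), of \<epsilon>] that(1) by simp
  qed
  have shorter_than_u: "powsum q (n + 1) v < powsum q (n + 1) (lift_vec p n \<epsilon> u)"
  proof -
    have "\<epsilon> < \<bar>\<epsilon> / real p * lift_form n u\<bar>"
      using assms(2,3) u(3) by (simp add: abs_mult pos_less_divide_eq mult.commute)
    then have "\<epsilon> ^ q < \<bar>\<epsilon> / real p * lift_form n u\<bar> ^ q"
      using assms(3) q by (intro power_strict_mono) auto
    then show ?thesis
      using v powsum_lift_vec[OF u(1), of q p \<epsilon>] u(2) by linarith
  qed
  show ?thesis
    unfolding lift_vec_image_signed_set
    unfolding signed_set_def qnorm_less_qnorm_iff[OF q]
    using shorter_than_W shorter_than_u
    by (auto simp: v_def) metis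
qed

lemma shortest_vectors_image_lift_vec:
  assumes q: "q \<ge> 1" and p: "p > 0" and "\<epsilon> > 0" and n: "n \<ge> 1"
    and u: "in_dim n u" "powsum q n u = real p ^ q" "real p < lift_form n u"
    and dim: "\<forall>y\<in>L. in_dim n y"
    and ball: "lift_vec p n \<epsilon> ` L \<inter> qball q (n + 1) R = lift_vec p n \<epsilon> ` signed_set n (Wvec p) u"
  defines "v \<equiv> lift_vec p n \<epsilon> (Wvec p 1)"
  shows "{x \<in> lift_vec p n \<epsilon> ` L. x \<noteq> (\<lambda>j. 0) \<and>
            (\<forall>y \<in> lift_vec p n \<epsilon> ` L. y \<noteq> (\<lambda>j. 0) \<longrightarrow> qnorm q (n + 1) x \<le> qnorm q (n + 1) y)}
           = {v, (\<lambda>j. - v j)}"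
proof (rule shortest_vectors_eq[OF _ ball])
  show "\<forall>x\<in>lift_vec p n \<epsilon> ` L. in_dim (n + 1) x"
    using dim in_dim_lift_vec by blast
  show "v \<in> lift_vec p n \<epsilon> ` signed_set n (Wvec p) u"
    "(\<lambda>j. - v j) \<in> lift_vec p n \<epsilon> ` signed_set n (Wvec p) u"
    unfolding v_def lift_vec_image_signed_set unfolding signed_set_def using n by auto
  have "v 1 = real p"
    using n by (simp add: v_def lift_vec_def Wvec_def)
  then show "v \<noteq> (\<lambda>j. 0)"
    using p by auto
  show "\<forall>x\<in>lift_vec p n \<epsilon> ` signed_set n (Wvec p) u.
          x \<noteq> (\<lambda>j. 0) \<and> x \<noteq> v \<and> x \<noteq> (\<lambda>j. - v j) \<longrightarrow> qnorm q (n + 1) v < qnorm q (n + 1) x"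
    unfolding v_def using assms by (intro qnorm_lift_Wvec_1_less) auto
qed

lemma signed_set_Ltilde:
  assumes "p > 0" "n \<ge> 1"
  shows "lift_vec p n \<epsilon> ` signed_set n (Wvec p) (uvec n \<sigma>) = signed_set n (vvec p n \<epsilon>) (utilde p n \<sigma> \<epsilon>)"
  unfolding lift_vec_image_signed_set utilde_eq_lift_vec[OF assms]
  using assms(1) by (intro signed_set_cong) (simp add: vvec_eq_lift_vec)

theorem lemma4p6:
  fixes q p n :: nat and \<sigma> :: "nat \<Rightarrow> int" and R \<epsilon> :: real
  assumes q_pos: "q \<ge> 1"
    and p_prime: "prime p" and p_ge: "p \<ge> 7"
    and n_ge: "n \<ge> 2"
    and sigma_vals: "\<forall>i\<in>{1..n-1}. \<sigma> i \<in> {2, 3}"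
    and sigma_sum: "(\<Sum>i=1..n-1. \<sigma> i ^ q) = int p ^ q - 1"
    and sigma_mod: "\<forall>k::int. \<not> [k = 0] (mod int p) \<and> \<not> [k = 1] (mod int p) \<and> \<not> [k = -1] (mod int p)
                      \<longrightarrow> modnorm q (real p) (n-1) (\<lambda>i. of_int (k * \<sigma> i))
                          > modnorm q (real p) (n-1) (\<lambda>i. of_int (\<sigma> i))"
    and q_ge2: "q \<ge> 2 \<longrightarrow> 4 * int n - 3 > 2 * int p"
    and R_gt: "R > real p"
    and R_ball: "Lplus p n \<sigma> \<inter> qball q n R =
                   {(\<lambda>j. 0)} \<union> {Wvec p i | i. i \<in> {1..n}} \<union> {(\<lambda>j. - Wvec p i j) | i. i \<in> {1..n}}
                   \<union> {uvec n \<sigma>, (\<lambda>j. - uvec n \<sigma> j)}"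
    and eps_pos: "\<epsilon> > 0"
    and eps_lt: "\<epsilon> < (R - real p) / 2"
    and eps_q: "\<epsilon> ^ q < real p ^ q * (R ^ q - real p ^ q) / (real ((n - 1) * (p - 1) + 1)) ^ q"
  shows "lattice_of_rank (n + 1) n (Ltilde p n \<sigma> \<epsilon>)
       \<and> Ltilde p n \<sigma> \<epsilon> \<inter> qball q (n + 1) R =
           {(\<lambda>j. 0)} \<union> {vvec p n \<epsilon> i | i. i \<in> {1..n}} \<union> {(\<lambda>j. - vvec p n \<epsilon> i j) | i. i \<in> {1..n}}
           \<union> {utilde p n \<sigma> \<epsilon>, (\<lambda>j. - utilde p n \<sigma> \<epsilon> j)}
       \<and> {x \<in> Ltilde p n \<sigma> \<epsilon>. x \<noteq> (\<lambda>j. 0) \<and>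
             (\<forall>y \<in> Ltilde p n \<sigma> \<epsilon>. y \<noteq> (\<lambda>j. 0) \<longrightarrow> qnorm q (n + 1) x \<le> qnorm q (n + 1) y)}
         = {vvec p n \<epsilon> 1, (\<lambda>j. - vvec p n \<epsilon> 1 j)}"
proof -
  \<comment> \<open>\<open>p_prime\<close> and \<open>sigma_mod\<close> are what the paper needs to establish \<open>R_ball\<close>, which is assumed here.\<close>
  have p: "p > 0" and n: "n \<ge> 1"
    using p_ge n_ge by auto
  have u: "in_dim n (uvec n \<sigma>)" "powsum q n (uvec n \<sigma>) = real p ^ q"
    by (rule in_dim_uvec[OF n], rule powsum_uvec_eq[OF n _ sigma_sum]) (use sigma_vals in auto)
  note form = lift_form_uvec_bounds[OF q_pos p_ge n_ge sigma_vals sigma_sum q_ge2]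
  note Ltilde = Ltilde_eq_image_lift_vec[OF p n]
  have dim: "\<forall>y\<in>Lplus p n \<sigma>. in_dim n y"
    using in_dim_Lplus[OF n] by blast
  have "Lplus p n \<sigma> \<inter> qball q n R = signed_set n (Wvec p) (uvec n \<sigma>)"
    unfolding signed_set_def by (rule R_ball)
  then have ball: "Ltilde p n \<sigma> \<epsilon> \<inter> qball q (n + 1) R
                     = lift_vec p n \<epsilon> ` signed_set n (Wvec p) (uvec n \<sigma>)"
    unfolding Ltilde by (rule lift_vec_image_inter_qball_signed_set[OF q_pos p eps_pos eps_lt u form eps_q dim])
  moreover have "lattice_of_rank (n + 1) n (Ltilde p n \<sigma> \<epsilon>)"
    unfolding Ltilde by (intro lattice_of_rank_image_lift_vec lattice_of_rank_Lplus p n)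
  moreover have "vvec p n \<epsilon> 1 = lift_vec p n \<epsilon> (Wvec p 1)"
    using p n by (simp add: vvec_eq_lift_vec)
  ultimately show ?thesis
    using shortest_vectors_image_lift_vec[OF q_pos p eps_pos n u form(1) dim ball[unfolded Ltilde]]
    unfolding Ltilde signed_set_Ltilde[OF p n] unfolding signed_set_def by simp
qed

end
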